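(* The condition $C_2$ is not maximal in general: for $n=2$ (three processes), $t=1$, $k=1$ and values $V=\{0,1\}$, there is a condition $C'$ with $C_2\subsetneq C'$ such that consensus ($1$-set agreement) is solvable on $C'\times R^1_2$ (for instance $C'=C_2\cup\{(1,1,0)\}$).
   Context: Fix processes $\Pi_n=\{0,\dots,n\}$. $ImS_n$ is the set of directed graphs $G$ on $\Pi_n$ containing all self-loops such that in-neighbourhoods $In_G(a)=\{b:(b,a)\in A(G)\}$ are totally ordered by inclusion and $(a,b),(b,c)\in A(G)\Rightarrow(a,c)\in A(G)$; $IIS_n=ImS_n^\omega$. In an execution $\iota.w$, $w=G_1G_2\cdots$, processes start with inputs from $\iota$, and in round $r$ process $q$ receives the state of $p$ iff $(p,q)\in A(G_r)$, then updates its state. $Q(w)$ is the set of processes heard by every process in infinitely many rounds; the iterated $t$-resilient model is $R^t_n=\{w\in IIS_n:|Q(w)|\ge n+1-t\}$. An input vector is a map $I:\Pi_n\to V$, written $(I(0),\dots,I(n))$; a condition is a set of input vectors. $k$-set agreement over $V$: each process must decide a value that is the input of some process, and at most $k$ distinct values are decided; it is solvable on $C\times R^t_n$ if some algorithm achieves this, every process deciding after finitely many rounds, for every $I\in C$, $w\in R^t_n$. A condition $C$ is maximal if $k$-set agreement is solvable on $C\times R^t_n$ but not on $C'\times R^t_n$ for any $C'\supsetneq C$. For an input vector $I$, let $\#a_1\ge\#a_2\ge\dots$ be the numbers of occurrences of the distinct values of $I$ in nonincreasing order (with $\#a_i=0$ beyond the number of distinct values). $C_2$ is the set of input vectors with $\sum_{i=1}^{k}\#a_i-k\cdot\#a_{k+1}>t$.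 *)

theory Defs
  imports Main
begin

type_synonym graph = "(nat \<times> nat) set"

definition In_nb :: "graph \<Rightarrow> nat \<Rightarrow> nat set" where
  "In_nb G a = {b. (b, a) \<in> G}"

definition ImS :: "nat \<Rightarrow> graph \<Rightarrow> bool" where
  "ImS n G \<longleftrightarrow>
     G \<subseteq> {0..n} \<times> {0..n}
   \<and> (\<forall>a\<le>n. (a, a) \<in> G)
   \<and> (\<forall>a\<le>n. \<forall>b\<le>n. In_nb G a \<subseteq> In_nb G b \<or> In_nb G b \<subseteq> In_nb G a)
   \<and> (\<forall>a b c. (a, b) \<in> G \<longrightarrow> (b, c) \<in> G \<longrightarrow> (a, c) \<in> G)"

text \<open>An infinite word G_1 G_2 ...; round r+1 uses graph w r.\<close>
definition IIS :: "nat \<Rightarrow> (nat \<Rightarrow> graph) set" where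
  "IIS n = {w. \<forall>r. ImS n (w r)}"

definition Qset :: "nat \<Rightarrow> (nat \<Rightarrow> graph) \<Rightarrow> nat set" where
  "Qset n w = {p. p \<le> n \<and> infinite {r. \<forall>q\<le>n. (p, q) \<in> w r}}"

definition Rmodel :: "nat \<Rightarrow> nat \<Rightarrow> (nat \<Rightarrow> graph) set" where
  "Rmodel n t = {w \<in> IIS n. card (Qset n w) \<ge> n + 1 - t}"

text \<open>Full-information views: the state of a process.\<close>
datatype 'v view = Init nat 'v | Rnd nat "(nat \<times> 'v view) list"

text \<open>Input vectors are lists of length n+1 (entry i = input of process i).\<close>
fun fi_view :: "nat \<Rightarrow> 'v list \<Rightarrow> (nat \<Rightarrow> graph) \<Rightarrow> nat \<Rightarrow> nat \<Rightarrow> 'v view" where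
  "fi_view n I w 0 q = Init q (I ! q)"
| "fi_view n I w (Suc r) q =
     Rnd q (map (\<lambda>p. (p, fi_view n I w r p)) (filter (\<lambda>p. (p, q) \<in> w r) [0..<Suc n]))"

definition input_vectors :: "nat \<Rightarrow> 'v set \<Rightarrow> 'v list set" where
  "input_vectors n V = {I. length I = Suc n \<and> set I \<subseteq> V}"

text \<open>An algorithm is a decision map on full-information views (None = undecided);
  a process decides in the first round in which the map is defined.\<close>
definition decision :: "('v view \<Rightarrow> 'v option) \<Rightarrow> nat \<Rightarrow> 'v list \<Rightarrow> (nat \<Rightarrow> graph) \<Rightarrow> nat \<Rightarrow> 'v" where
  "decision \<delta> n I w q = the (\<delta> (fi_view n I w (LEAST r. \<delta> (fi_view n I w r q) \<noteq> None) q))"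

definition solves_set_agreement ::
  "nat \<Rightarrow> nat \<Rightarrow> nat \<Rightarrow> 'v list set \<Rightarrow> ('v view \<Rightarrow> 'v option) \<Rightarrow> bool" where
  "solves_set_agreement n t k C \<delta> \<longleftrightarrow>
     (\<forall>I\<in>C. \<forall>w\<in>Rmodel n t.
        (\<forall>q\<le>n. \<exists>r. \<delta> (fi_view n I w r q) \<noteq> None)
      \<and> (\<forall>q\<le>n. decision \<delta> n I w q \<in> set I)
      \<and> card {decision \<delta> n I w q | q. q \<le> n} \<le> k)"

definition set_agreement_solvable :: "nat \<Rightarrow> nat \<Rightarrow> nat \<Rightarrow> 'v list set \<Rightarrow> bool" where
  "set_agreement_solvable n t k C \<longleftrightarrow> (\<exists>\<delta>. solves_set_agreement n t k C \<delta>)"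

text \<open>Occurrence counts of the distinct values, nonincreasing; index i (0-based)
  is #a_(i+1), and 0 beyond the number of distinct values.\<close>
definition occ_counts :: "'v list \<Rightarrow> nat list" where
  "occ_counts I = rev (sort (map (count_list I) (remdups I)))"

definition occ :: "'v list \<Rightarrow> nat \<Rightarrow> nat" where
  "occ I i = (if i < length (occ_counts I) then occ_counts I ! i else 0)"

definition C2 :: "nat \<Rightarrow> nat \<Rightarrow> nat \<Rightarrow> 'v set \<Rightarrow> 'v list set" where
  "C2 n t k V = {I \<in> input_vectors n V.
     int (\<Sum>i<k. occ I i) - int k * int (occ I k) > int t}"

end

theory Submission
  imports Defs
begin

text \<open>If some t + 1 processes are guaranteed to share their input, consensus is solved by
  deciding that common input as soon as the input of one of them is known: in the t-resilient
  model at least n + 1 - t processes are heard by everybody infinitely often, and one of them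
  is among the t + 1, so eventually everybody learns the common input. For three processes,
  t = 1 and the pair of processes 0 and 1, this condition contains C2 = {000, 111} and also 110.\<close>

fun known_inputs :: "'v view \<Rightarrow> (nat \<times> 'v) set" where
  "known_inputs (Init p v) = {(p, v)}"
| "known_inputs (Rnd q xs) = (\<Union>x\<in>set xs. known_inputs (snd x))"

lemma known_inputs_fi_view_Suc:
  "known_inputs (fi_view n I w (Suc r) q) =
     (\<Union>p\<in>{p. p \<le> n \<and> (p, q) \<in> w r}. known_inputs (fi_view n I w r p))"
  by (auto simp del: upt_Suc simp: image_image less_Suc_eq_le)

lemma known_inputs_fi_view_subset:
  assumes "q \<le> n"
  shows "known_inputs (fi_view n I w r q) \<subseteq> {(p, I ! p) | p. p \<le> n}"
  using assms
proof (induction r arbitrary: q)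
  case 0
  then show ?case by auto
next
  case (Suc r)
  then show ?case unfolding known_inputs_fi_view_Suc by blast
qed

lemma own_input_in_known_inputs:
  assumes "\<forall>r. (q, q) \<in> w r" and "q \<le> n"
  shows "(q, I ! q) \<in> known_inputs (fi_view n I w r q)"
proof (induction r)
  case 0
  then show ?case by simp
next
  case (Suc r)
  then show ?case using assms unfolding known_inputs_fi_view_Suc by blast
qed

lemma known_inputs_fi_view_arc:
  assumes "(p, q) \<in> w r" and "p \<le> n"
  shows "known_inputs (fi_view n I w r p) \<subseteq> known_inputs (fi_view n I w (Suc r) q)"
  using assms unfolding known_inputs_fi_view_Suc by blast

lemma Rmodel_self_loop:
  assumes "w \<in> Rmodel n t" and "p \<le> n"
  shows "(p, p) \<in> w r"
  using assms by (simp add: Rmodel_def IIS_def ImS_def)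

lemma Qset_subset: "Qset n w \<subseteq> {0..n}"
  by (auto simp: Qset_def)

lemma Rmodel_Qset_meets:
  assumes "w \<in> Rmodel n t" and "P \<subseteq> {0..n}" and "t < card P"
  shows "P \<inter> Qset n w \<noteq> {}"
proof
  assume disjoint: "P \<inter> Qset n w = {}"
  have fin: "finite P" "finite (Qset n w)"
    using finite_subset[OF assms(2)] finite_subset[OF Qset_subset] by auto
  have "card P + card (Qset n w) = card (P \<union> Qset n w)"
    using disjoint fin by (simp add: card_Un_disjoint)
  also have "\<dots> \<le> card {0..n}"
    using assms(2) Qset_subset[of n w] by (intro card_mono) auto
  finally have "card P + card (Qset n w) \<le> Suc n" by simp
  moreover have "Suc n - t \<le> card (Qset n w)" using assms(1) by (simp add: Rmodel_def)
  ultimately show False using assms(3) by arith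
qed

lemma Qset_input_known_eventually:
  assumes "w \<in> Rmodel n t" and "p \<in> Qset n w" and "q \<le> n"
  shows "\<exists>r. (p, I ! p) \<in> known_inputs (fi_view n I w r q)"
proof -
  have p: "p \<le> n" using assms(2) by (simp add: Qset_def)
  obtain r where "(p, q) \<in> w r"
    using assms(2,3) not_finite_existsD by (fastforce simp: Qset_def)
  moreover have "(p, I ! p) \<in> known_inputs (fi_view n I w r p)"
    using own_input_in_known_inputs Rmodel_self_loop[OF assms(1) p] p by blast
  ultimately show ?thesis using known_inputs_fi_view_arc p by blast
qed

definition unanimous_on :: "nat set \<Rightarrow> nat \<Rightarrow> 'v set \<Rightarrow> 'v list set" where
  "unanimous_on P n V = {I \<in> input_vectors n V. \<forall>p\<in>P. \<forall>p'\<in>P. I ! p = I ! p'}"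

definition adopt_input_of :: "nat set \<Rightarrow> 'v view \<Rightarrow> 'v option" where
  "adopt_input_of P v =
     (if \<exists>p\<in>P. \<exists>x. (p, x) \<in> known_inputs v
      then Some (SOME x. \<exists>p\<in>P. (p, x) \<in> known_inputs v) else None)"

lemma adopt_input_of_eq:
  assumes "\<And>p x. p \<in> P \<Longrightarrow> (p, x) \<in> known_inputs v \<Longrightarrow> x = c"
  shows "adopt_input_of P v = (if \<exists>p\<in>P. \<exists>x. (p, x) \<in> known_inputs v then Some c else None)"
  using assms unfolding adopt_input_of_def by (auto intro!: some_equality)

lemma consensus_solvable_unanimous_on:
  assumes "P \<subseteq> {0..n}" and "t < card P"
  shows "set_agreement_solvable n t 1 (unanimous_on P n V)"
proof -
  have "solves_set_agreement n t 1 (unanimous_on P n V) (adopt_input_of P)"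
    unfolding solves_set_agreement_def
  proof (intro ballI)
    fix I w
    assume I: "I \<in> unanimous_on P n V" and w: "w \<in> Rmodel n t"
    obtain p\<^sub>0 where "p\<^sub>0 \<in> P" using assms(2) by fastforce
    define c where "c = I ! p\<^sub>0"
    have adopt_view: "adopt_input_of P (fi_view n I w r q) =
        (if \<exists>p\<in>P. \<exists>x. (p, x) \<in> known_inputs (fi_view n I w r q) then Some c else None)"
      if "q \<le> n" for r q
    proof (rule adopt_input_of_eq)
      fix p x assume "p \<in> P" "(p, x) \<in> known_inputs (fi_view n I w r q)"
      then have "x = I ! p"
        using known_inputs_fi_view_subset[OF \<open>q \<le> n\<close>] by blast
      moreover have "I ! p = I ! p\<^sub>0"
        using I \<open>p \<in> P\<close> \<open>p\<^sub>0 \<in> P\<close> unfolding unanimous_on_def by blast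
      ultimately show "x = c" by (simp add: c_def)
    qed
    have decided: "\<exists>r. adopt_input_of P (fi_view n I w r q) \<noteq> None" if "q \<le> n" for q
      using Rmodel_Qset_meets[OF w assms] Qset_input_known_eventually[OF w _ that] adopt_view[OF that]
      by fastforce
    have decides_c: "decision (adopt_input_of P) n I w q = c" if "q \<le> n" for q
    proof -
      let ?r = "LEAST r. adopt_input_of P (fi_view n I w r q) \<noteq> None"
      have "adopt_input_of P (fi_view n I w ?r q) \<noteq> None"
        using LeastI_ex[OF decided[OF that]] .
      then have "adopt_input_of P (fi_view n I w ?r q) = Some c"
        unfolding adopt_view[OF that] by (simp split: if_split_asm)
      then show ?thesis unfolding decision_def by simp
    qed
    have "length I = Suc n" and "p\<^sub>0 \<le> n"
      using I \<open>p\<^sub>0 \<in> P\<close> assms(1) by (auto simp: unanimous_on_def input_vectors_def)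
    then have "c \<in> set I" by (simp add: c_def)
    moreover have "{decision (adopt_input_of P) n I w q | q. q \<le> n} = {c}"
      using decides_c by fastforce
    ultimately show "(\<forall>q\<le>n. \<exists>r. adopt_input_of P (fi_view n I w r q) \<noteq> None)
      \<and> (\<forall>q\<le>n. decision (adopt_input_of P) n I w q \<in> set I)
      \<and> card {decision (adopt_input_of P) n I w q | q. q \<le> n} \<le> 1"
      using decided decides_c by simp
  qed
  then show ?thesis unfolding set_agreement_solvable_def by blast
qed

lemma input_vectors_2_01:
  "input_vectors 2 {0, 1::nat} =
     {[0,0,0], [0,0,1], [0,1,0], [0,1,1], [1,0,0], [1,0,1], [1,1,0], [1,1,1]}"
  (is "_ = ?vectors")
proof
  show "input_vectors 2 {0, 1} \<subseteq> ?vectors"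
  proof
    fix I :: "nat list"
    assume "I \<in> input_vectors 2 {0, 1}"
    then have "length I = 3" and "set I \<subseteq> {0, 1}" by (simp_all add: input_vectors_def)
    obtain a b c where "I = [a, b, c]"
      using \<open>length I = 3\<close> by (auto simp: numeral_3_eq_3 length_Suc_conv)
    with \<open>set I \<subseteq> {0, 1}\<close> show "I \<in> ?vectors" by auto
  qed
  show "?vectors \<subseteq> input_vectors 2 {0, 1}"
    by (simp add: input_vectors_def)
qed

lemma C2_2_1_1_01: "C2 2 1 1 {0, 1::nat} = {[0,0,0], [1,1,1]}"
  unfolding C2_def input_vectors_2_01 by (auto simp: occ_def occ_counts_def)

lemma unanimous_on_01_2_01:
  "unanimous_on {0, 1} 2 {0, 1::nat} = {[0,0,0], [0,0,1], [1,1,0], [1,1,1]}"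
  unfolding unanimous_on_def input_vectors_2_01 by auto

theorem mainTheorem13:
  shows "\<exists>C' :: nat list set.
           C2 2 1 1 {0, 1} \<subset> C'
         \<and> C' \<subseteq> input_vectors 2 {0, 1}
         \<and> set_agreement_solvable 2 1 1 C'"
proof (intro exI conjI)
  have "C2 2 1 1 {0, 1} \<subseteq> unanimous_on {0, 1} 2 {0, 1::nat}"
    and "[1, 1, 0] \<in> unanimous_on {0, 1} 2 {0, 1::nat} - C2 2 1 1 {0, 1}"
    unfolding C2_2_1_1_01 unanimous_on_01_2_01 by simp_all
  then show "C2 2 1 1 {0, 1} \<subset> unanimous_on {0, 1} 2 {0, 1::nat}" by blast
  show "unanimous_on {0, 1} 2 {0, 1::nat} \<subseteq> input_vectors 2 {0, 1}"
    unfolding unanimous_on_def by (rule Collect_subset)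
  show "set_agreement_solvable 2 1 1 (unanimous_on {0, 1} 2 {0, 1::nat})"
    by (rule consensus_solvable_unanimous_on) auto
qed

end
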